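(* Let $p\ge 2$ and $\epsilon>0$. There exists an in-tree task graph $T$ in the Pebble Game model such that every schedule $S$ of $T$ on $p$ processors with makespan $C_{\max}(S)=C^*_p(T)$ has peak memory $M(S)> (p-1-\epsilon)\,M^*_p(T)$. Consequently, no algorithm that is optimal for makespan minimization is a $(p-1-\epsilon)$-approximation for peak memory minimization.
   Context: Model. An in-tree task graph $T$ has nodes $\{1,\dots,n\}$ and a root; every non-root node $i$ has a parent, and $\mathrm{Children}(i)$ is the set of children of $i$. Each node $i$ has a processing time $w_i\ge 0$, an execution-file size $n_i\ge 0$ and an output-file size $f_i\ge 0$. A schedule on $p$ identical processors assigns each node $i$ a processor and a start time $\sigma_i\ge 0$; node $i$ runs without preemption during $[\sigma_i,\sigma_i+w_i)$, a processor runs at most one node at a time, and a node may start only after all its children have completed. The makespan is $C_{\max}=\max_i(\sigma_i+w_i)$. Memory: the output file of $i$ (size $f_i$) occupies memory from the start of $i$ until the completion of the parent of $i$ (for the root, until the end of the schedule), and the execution file of $i$ occupies memory while $i$ runs. The memory used at time $t$ is the total size of files present at time $t$; the peak memory $M(S)$ is the supremum over $t$ of the memory used. $C^*_p(T)$ denotes the minimum makespan and $M^*_p(T)$ the minimum peak memory over all schedules of $T$ on $p$ processors. The Pebble Game model is the special case $f_i=1$, $w_i=1$, $n_i=0$ for all $i$. *)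

theory Defs
  imports Complex_Main
begin

definition in_tree :: "nat \<Rightarrow> nat \<Rightarrow> (nat \<Rightarrow> nat) \<Rightarrow> bool" where
  "in_tree n r par \<longleftrightarrow> r \<in> {1..n}
     \<and> (\<forall>i\<in>{1..n}. i \<noteq> r \<longrightarrow> par i \<in> {1..n})
     \<and> (\<forall>i\<in>{1..n}. \<exists>k. (par ^^ k) i = r)"

definition children :: "nat \<Rightarrow> nat \<Rightarrow> (nat \<Rightarrow> nat) \<Rightarrow> nat \<Rightarrow> nat set" where
  "children n r par i = {j \<in> {1..n}. j \<noteq> r \<and> par j = i}"

definition valid_schedule ::
  "nat \<Rightarrow> nat \<Rightarrow> (nat \<Rightarrow> nat) \<Rightarrow> (nat \<Rightarrow> real) \<Rightarrow> nat \<Rightarrow> (nat \<Rightarrow> nat) \<Rightarrow> (nat \<Rightarrow> real) \<Rightarrow> bool" where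
  "valid_schedule n r par w p proc \<sigma> \<longleftrightarrow>
     (\<forall>i\<in>{1..n}. proc i < p \<and> 0 \<le> \<sigma> i)
     \<and> (\<forall>i\<in>{1..n}. \<forall>j\<in>{1..n}. i \<noteq> j \<and> proc i = proc j \<longrightarrow>
           {\<sigma> i..<\<sigma> i + w i} \<inter> {\<sigma> j..<\<sigma> j + w j} = {})
     \<and> (\<forall>i\<in>{1..n}. \<forall>j\<in>children n r par i. \<sigma> j + w j \<le> \<sigma> i)"

definition makespan :: "nat \<Rightarrow> (nat \<Rightarrow> real) \<Rightarrow> (nat \<Rightarrow> real) \<Rightarrow> real" where
  "makespan n w \<sigma> = Max ((\<lambda>i. \<sigma> i + w i) ` {1..n})"

text \<open>Memory used at time t: output file of i present on [sigma i, completion of parent)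
  (root: until the end of the schedule), execution file present while i runs.\<close>
definition mem_used ::
  "nat \<Rightarrow> nat \<Rightarrow> (nat \<Rightarrow> nat) \<Rightarrow> (nat \<Rightarrow> real) \<Rightarrow> (nat \<Rightarrow> real) \<Rightarrow> (nat \<Rightarrow> real)
    \<Rightarrow> (nat \<Rightarrow> real) \<Rightarrow> real \<Rightarrow> real" where
  "mem_used n r par w nx f \<sigma> t =
     (\<Sum>i\<in>{1..n}.
        (if \<sigma> i \<le> t \<and> t < (if i = r then makespan n w \<sigma> else \<sigma> (par i) + w (par i))
         then f i else 0)
      + (if \<sigma> i \<le> t \<and> t < \<sigma> i + w i then nx i else 0))"

definition peak_memory ::
  "nat \<Rightarrow> nat \<Rightarrow> (nat \<Rightarrow> nat) \<Rightarrow> (nat \<Rightarrow> real) \<Rightarrow> (nat \<Rightarrow> real) \<Rightarrow> (nat \<Rightarrow> real)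
    \<Rightarrow> (nat \<Rightarrow> real) \<Rightarrow> real" where
  "peak_memory n r par w nx f \<sigma> = Sup (range (mem_used n r par w nx f \<sigma>))"

definition opt_makespan ::
  "nat \<Rightarrow> nat \<Rightarrow> (nat \<Rightarrow> nat) \<Rightarrow> (nat \<Rightarrow> real) \<Rightarrow> nat \<Rightarrow> real" where
  "opt_makespan n r par w p =
     Inf {makespan n w \<sigma> | proc \<sigma>. valid_schedule n r par w p proc \<sigma>}"

definition opt_peak ::
  "nat \<Rightarrow> nat \<Rightarrow> (nat \<Rightarrow> nat) \<Rightarrow> (nat \<Rightarrow> real) \<Rightarrow> (nat \<Rightarrow> real) \<Rightarrow> (nat \<Rightarrow> real)
    \<Rightarrow> nat \<Rightarrow> real" where
  "opt_peak n r par w nx f p =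
     Inf {peak_memory n r par w nx f \<sigma> | proc \<sigma>. valid_schedule n r par w p proc \<sigma>}"

definition pebble_w :: "nat \<Rightarrow> real" where "pebble_w = (\<lambda>_. 1)"
definition pebble_nx :: "nat \<Rightarrow> real" where "pebble_nx = (\<lambda>_. 0)"
definition pebble_f :: "nat \<Rightarrow> real" where "pebble_f = (\<lambda>_. 1)"

end

theory Submission
  imports Defs
begin

(*
  The witness tree (for p \<ge> 2 and a parameter K) consists of a root with p - 1 branches.
  Branch b is a chain of (p - 1) K + 1 nodes ending in a "top" node that is a child of
  the root; the top node has K further leaf children.

  Upper bound on C*: processor 0 runs all (p - 1) K leaves one after the other while
  processor b + 1 runs chain b, so the makespan is (p - 1) K + 2.
  Lower bound on the memory of fast schedules: in any schedule of makespan at most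
  (p - 1) K + 2 each chain forces its top node to start exactly at time (p - 1) K, so at
  that instant the output files of all (p - 1) K leaves are present.
  Upper bound on M*: the sequential schedule in index order never holds more than
  K + p + 2 files.
  Choosing K with \<epsilon> K > (p - 1)(p + 2) then separates the two memory bounds by the
  factor p - 1 - \<epsilon>.
*)

definition live_files :: "nat \<Rightarrow> nat \<Rightarrow> (nat \<Rightarrow> nat) \<Rightarrow> (nat \<Rightarrow> real) \<Rightarrow> real \<Rightarrow> nat set" where
  "live_files n r par \<sigma> t = {i \<in> {1..n}. \<sigma> i \<le> t \<and>
     t < (if i = r then makespan n pebble_w \<sigma> else \<sigma> (par i) + 1)}"

lemma pebble_mem_used:
  "mem_used n r par pebble_w pebble_nx pebble_f \<sigma> t = real (card (live_files n r par \<sigma> t))"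
proof -
  have count: "(\<Sum>i\<in>A. if P i then 1 else 0 :: real) = real (card {i\<in>A. P i})"
    if "finite A" for A :: "nat set" and P
    using that by (simp add: sum.inter_filter[symmetric])
  show ?thesis
    unfolding mem_used_def live_files_def pebble_w_def pebble_nx_def pebble_f_def
    by (simp add: count)
qed

lemma card_live_files_le: "card (live_files n r par \<sigma> t) \<le> n"
proof -
  have "card (live_files n r par \<sigma> t) \<le> card {1..n}"
    by (rule card_mono) (auto simp: live_files_def)
  then show ?thesis by simp
qed

lemma card_le_peak:
  assumes "A \<subseteq> live_files n r par \<sigma> t"
  shows "real (card A) \<le> peak_memory n r par pebble_w pebble_nx pebble_f \<sigma>"
proof -
  have "real (card A) \<le> mem_used n r par pebble_w pebble_nx pebble_f \<sigma> t"
    unfolding pebble_mem_used using card_mono[OF _ assms] by (simp add: live_files_def)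
  also have "\<dots> \<le> peak_memory n r par pebble_w pebble_nx pebble_f \<sigma>"
    unfolding peak_memory_def
    by (rule cSup_upper) (auto intro!: bdd_aboveI[of _ "real n"] simp: pebble_mem_used card_live_files_le)
  finally show ?thesis .
qed

lemma peak_le:
  assumes "\<And>t. card (live_files n r par \<sigma> t) \<le> B"
  shows "peak_memory n r par pebble_w pebble_nx pebble_f \<sigma> \<le> real B"
  unfolding peak_memory_def by (rule cSup_least) (auto simp: pebble_mem_used assms)

lemma opt_peak_bounds:
  assumes "valid_schedule n r par pebble_w p proc \<sigma>"
  shows "0 \<le> opt_peak n r par pebble_w pebble_nx pebble_f p"
    and "opt_peak n r par pebble_w pebble_nx pebble_f p \<le> peak_memory n r par pebble_w pebble_nx pebble_f \<sigma>"
proof -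
  let ?S = "{peak_memory n r par pebble_w pebble_nx pebble_f \<sigma>' |proc' \<sigma>'.
              valid_schedule n r par pebble_w p proc' \<sigma>'}"
  have nonneg: "0 \<le> x" if "x \<in> ?S" for x
    using that card_le_peak[of "{}"] by auto
  have mem: "peak_memory n r par pebble_w pebble_nx pebble_f \<sigma> \<in> ?S"
    using assms by blast
  show "0 \<le> opt_peak n r par pebble_w pebble_nx pebble_f p"
    unfolding opt_peak_def using mem nonneg by (intro cInf_greatest) auto
  show "opt_peak n r par pebble_w pebble_nx pebble_f p \<le> peak_memory n r par pebble_w pebble_nx pebble_f \<sigma>"
    unfolding opt_peak_def using mem nonneg by (intro cInf_lower bdd_belowI) auto
qed

lemma makespan_ge: "i \<in> {1..n} \<Longrightarrow> \<sigma> i + w i \<le> makespan n w \<sigma>"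
  unfolding makespan_def by (rule Max_ge) auto

lemma makespan_le: "1 \<le> n \<Longrightarrow> (\<And>i. i \<in> {1..n} \<Longrightarrow> \<sigma> i + w i \<le> B) \<Longrightarrow> makespan n w \<sigma> \<le> B"
  unfolding makespan_def by (subst Max_le_iff) auto

lemma opt_makespan_le:
  assumes "1 \<le> n" and "\<And>i. 0 \<le> w i" and "valid_schedule n r par w p proc \<sigma>"
  shows "opt_makespan n r par w p \<le> makespan n w \<sigma>"
  unfolding opt_makespan_def
proof (rule cInf_lower)
  show "makespan n w \<sigma> \<in> {makespan n w \<sigma>' |proc' \<sigma>'. valid_schedule n r par w p proc' \<sigma>'}"
    using assms(3) by blast
  have "0 \<le> makespan n w \<sigma>'" if "valid_schedule n r par w p proc' \<sigma>'" for proc' \<sigma>'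
  proof -
    have "0 \<le> \<sigma>' 1" using that assms(1) unfolding valid_schedule_def by auto
    also have "\<dots> \<le> \<sigma>' 1 + w 1" using assms(2) by simp
    also have "\<dots> \<le> makespan n w \<sigma>'" using assms(1) by (intro makespan_ge) auto
    finally show ?thesis .
  qed
  then show "bdd_below {makespan n w \<sigma>' |proc' \<sigma>'. valid_schedule n r par w p proc' \<sigma>'}"
    by (intro bdd_belowI[of _ 0]) blast
qed

lemma valid_precedence:
  assumes "valid_schedule n r par w p proc \<sigma>"
    and "i \<in> {1..n}" and "i \<noteq> r" and "par i \<in> {1..n}"
  shows "\<sigma> i + w i \<le> \<sigma> (par i)"
  using assms unfolding valid_schedule_def children_def by auto

lemma unit_slots_disjoint:
  "(x::nat) \<noteq> y \<Longrightarrow> {real x..<real x + 1} \<inter> {real y..<real y + 1} = {}"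
proof -
  assume "x \<noteq> y"
  then have "real x + 1 \<le> real y \<or> real y + 1 \<le> real x" by linarith
  then show ?thesis by auto
qed

lemma unit_schedule_valid:
  assumes "\<And>i. i \<in> {1..n} \<Longrightarrow> proc i < p"
    and "\<And>i j. i \<in> {1..n} \<Longrightarrow> j \<in> {1..n} \<Longrightarrow> i \<noteq> j \<Longrightarrow> proc i = proc j \<Longrightarrow> s i \<noteq> s j"
    and "\<And>i j. i \<in> {1..n} \<Longrightarrow> j \<in> children n r par i \<Longrightarrow> s j + 1 \<le> s i"
  shows "valid_schedule n r par pebble_w p proc (\<lambda>i. real (s i))"
  unfolding valid_schedule_def pebble_w_def
proof (intro conjI ballI impI)
  fix i j assume "i \<in> {1..n}" "j \<in> children n r par i"
  from assms(3)[OF this] show "real (s j) + 1 \<le> real (s i)" by linarith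
next
  fix i j assume "i \<in> {1..n}" "j \<in> {1..n}" "i \<noteq> j \<and> proc i = proc j"
  then have "s i \<noteq> s j" using assms(2) by blast
  then show "{real (s i)..<real (s i) + 1} \<inter> {real (s j)..<real (s j) + 1} = {}"
    by (rule unit_slots_disjoint)
qed (use assms(1) in auto)

(*
  Nodes are numbered 1..tree_size; node (b, a) = b * branch_size + a + 1
  is position a of branch b < p - 1: positions a < K are leaves, positions K..p K form the
  chain, position p K is the top. The last node tree_size is the root.
*)
definition branch_size :: "nat \<Rightarrow> nat \<Rightarrow> nat" where
  "branch_size p K = p * K + 1"

definition tree_size :: "nat \<Rightarrow> nat \<Rightarrow> nat" where
  "tree_size p K = (p - 1) * branch_size p K + 1"

definition node :: "nat \<Rightarrow> nat \<Rightarrow> nat \<Rightarrow> nat \<Rightarrow> nat" where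
  "node p K b a = b * branch_size p K + a + 1"

definition tpar :: "nat \<Rightarrow> nat \<Rightarrow> nat \<Rightarrow> nat" where
  "tpar p K i = (let b = (i - 1) div branch_size p K; a = (i - 1) mod branch_size p K in
     if a < K then node p K b (p * K) else if a < p * K then i + 1 else tree_size p K)"

lemma top_in_branch: "p * K < branch_size p K"
  by (simp add: branch_size_def)

lemma branch_offsets:
  fixes b p K :: nat
  assumes "b < p - 1"
  shows "K \<le> p * K" and "K + (p - 1) * K = p * K"
proof -
  have "1 \<le> p" using assms by simp
  then show "K \<le> p * K" "K + (p - 1) * K = p * K" by (simp, cases p, simp_all)
qed

lemma node_range:
  assumes "b < p - 1" and "a < branch_size p K"
  shows "node p K b a \<in> {1..tree_size p K}" and "node p K b a \<noteq> tree_size p K"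
proof -
  have "node p K b a < Suc b * branch_size p K + 1"
    using assms(2) by (simp add: node_def)
  also have "\<dots> \<le> tree_size p K"
    using assms(1) unfolding tree_size_def by (intro add_le_mono1 mult_le_mono1) simp
  finally show "node p K b a \<in> {1..tree_size p K}" "node p K b a \<noteq> tree_size p K"
    by (auto simp: node_def)
qed

lemma node_cases:
  assumes "i \<in> {1..tree_size p K}" and "i \<noteq> tree_size p K"
  obtains b a where "b < p - 1" "a < branch_size p K" "i = node p K b a"
proof
  have "i - 1 < (p - 1) * branch_size p K"
    using assms by (auto simp: tree_size_def)
  then show "(i - 1) div branch_size p K < p - 1"
    by (simp add: div_less_iff_less_mult branch_size_def mult.commute)
  show "(i - 1) mod branch_size p K < branch_size p K" by (simp add: branch_size_def)
  show "i = node p K ((i - 1) div branch_size p K) ((i - 1) mod branch_size p K)"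
    using assms(1) by (simp add: node_def div_mult_mod_eq)
qed

lemma node_div_mod:
  assumes "a < branch_size p K"
  shows "(node p K b a - 1) div branch_size p K = b" and "(node p K b a - 1) mod branch_size p K = a"
  using assms by (simp_all add: node_def)

lemma node_inj:
  assumes "a < branch_size p K" and "a' < branch_size p K" and "node p K b a = node p K b' a'"
  shows "b = b'" and "a = a'"
  using node_div_mod[OF assms(1), of b] node_div_mod[OF assms(2), of b'] assms(3) by metis+

lemma branch_cases:
  assumes "b < p - 1" and "a < branch_size p K"
  obtains (leaf) "a < K" and "K \<le> p * K" and "tpar p K (node p K b a) = node p K b (p * K)"
    | (chain) "K \<le> a" and "a < p * K" and "a + 1 < branch_size p K"
        and "tpar p K (node p K b a) = node p K b (a + 1)"
    | (top) "a = p * K" and "K \<le> p * K" and "tpar p K (node p K b a) = tree_size p K"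
proof -
  note fit = branch_offsets(1)[OF assms(1), of K]
  have parent: "tpar p K (node p K b a) =
    (if a < K then node p K b (p * K) else if a < p * K then node p K b (a + 1) else tree_size p K)"
    using node_div_mod[OF assms(2)] by (simp add: tpar_def Let_def node_def)
  consider "a < K" | "K \<le> a" "a < p * K" | "a = p * K"
    using assms(2) by (fastforce simp: branch_size_def)
  then show thesis
  proof cases
    case 1
    have "tpar p K (node p K b a) = node p K b (p * K)"
      unfolding parent if_P[OF 1] by simp
    with 1 fit show thesis by (rule leaf)
  next
    case 2
    then have "\<not> a < K" by linarith
    have "tpar p K (node p K b a) = node p K b (a + 1)"
      unfolding parent if_not_P[OF \<open>\<not> a < K\<close>] if_P[OF 2(2)] by simp
    moreover have "a + 1 < branch_size p K" using 2(2) by (simp add: branch_size_def)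
    ultimately show thesis using 2 by (intro chain)
  next
    case 3
    with fit have "\<not> a < K" "\<not> a < p * K" by linarith+
    then have "tpar p K (node p K b a) = tree_size p K"
      unfolding parent if_not_P[OF \<open>\<not> a < K\<close>] if_not_P[OF \<open>\<not> a < p * K\<close>] by simp
    with 3 fit show thesis by (rule top)
  qed
qed

(* Parents have larger indices, so iterating the parent map reaches the root. *)
lemma tpar_increasing:
  assumes "i \<in> {1..tree_size p K}" and "i \<noteq> tree_size p K"
  shows "i < tpar p K i" and "tpar p K i \<in> {1..tree_size p K}"
proof -
  obtain b a where ba: "b < p - 1" "a < branch_size p K" "i = node p K b a"
    using node_cases[OF assms] .
  from ba(1,2) have "node p K b a < tpar p K (node p K b a) \<and> tpar p K (node p K b a) \<in> {1..tree_size p K}"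
  proof (cases rule: branch_cases)
    case leaf
    then have "a < p * K" by linarith
    then show ?thesis using leaf(3) node_range(1)[OF ba(1) top_in_branch] by (simp add: node_def)
  next
    case chain
    then show ?thesis using node_range(1)[OF ba(1) chain(3)] by (simp add: node_def)
  next
    case top
    then show ?thesis using node_range[OF ba(1,2)] by auto
  qed
  then show "i < tpar p K i" "tpar p K i \<in> {1..tree_size p K}" using ba(3) by auto
qed

lemma tree_in_tree: "in_tree (tree_size p K) (tree_size p K) (tpar p K)"
proof -
  have "\<exists>k. (tpar p K ^^ k) i = tree_size p K" if "i \<in> {1..tree_size p K}" for i
    using that
  proof (induction "tree_size p K - i" arbitrary: i rule: less_induct)
    case (less i)
    show ?case
    proof (cases "i = tree_size p K")
      case True
      then show ?thesis by (intro exI[of _ 0]) simp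
    next
      case False
      note tpar_increasing[OF less.prems False]
      then obtain k where "(tpar p K ^^ k) (tpar p K i) = tree_size p K"
        using less.hyps[of "tpar p K i"] less.prems by fastforce
      then show ?thesis by (intro exI[of _ "Suc k"]) (simp add: funpow_Suc_right del: funpow.simps)
    qed
  qed
  then show ?thesis
    unfolding in_tree_def using tpar_increasing by (auto simp: tree_size_def)
qed

(*
  The fast schedule: leaf (b, a) runs on processor 0 in slot b K + a, chain/top node (b, a)
  runs on processor b + 1 in slot a - K, and the root runs in slot (p - 1) K + 1.
*)
definition fast_proc :: "nat \<Rightarrow> nat \<Rightarrow> nat \<Rightarrow> nat" where
  "fast_proc p K i = (if i = tree_size p K \<or> (i - 1) mod branch_size p K < K then 0
     else (i - 1) div branch_size p K + 1)"

definition fast_start :: "nat \<Rightarrow> nat \<Rightarrow> nat \<Rightarrow> nat" where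
  "fast_start p K i = (if i = tree_size p K then (p - 1) * K + 1
     else if (i - 1) mod branch_size p K < K
     then (i - 1) div branch_size p K * K + (i - 1) mod branch_size p K
     else (i - 1) mod branch_size p K - K)"

lemma fast_node:
  assumes "b < p - 1" and "a < branch_size p K"
  shows "fast_proc p K (node p K b a) = (if a < K then 0 else b + 1)"
    and "fast_start p K (node p K b a) = (if a < K then b * K + a else a - K)"
  using node_range(2)[OF assms] node_div_mod[OF assms(2)]
  by (simp_all add: fast_proc_def fast_start_def)

(* All leaves are finished on processor 0 before slot (p - 1) K. *)
lemma leaf_slot_lt:
  assumes "b < p - 1" and "a < K"
  shows "b * K + a < (p - 1) * (K :: nat)"
proof -
  have "b * K + a < Suc b * K" using assms(2) by simp
  also have "\<dots> \<le> (p - 1) * K" using assms(1) by (intro mult_le_mono1) simp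
  finally show ?thesis .
qed

lemma fast_start_le:
  assumes "i \<in> {1..tree_size p K}"
  shows "fast_start p K i \<le> (p - 1) * K + 1"
proof (cases "i = tree_size p K")
  case False
  then obtain b a where ba: "b < p - 1" "a < branch_size p K" "i = node p K b a"
    using node_cases[OF assms] by blast
  have "a - K \<le> (p - 1) * K"
    using ba(2) by (simp add: branch_size_def diff_mult_distrib)
  then show ?thesis
    unfolding ba(3) fast_node[OF ba(1,2)] using leaf_slot_lt[OF ba(1), of a K] by auto
qed (simp add: fast_start_def)

lemma fast_precedence:
  assumes "j \<in> children (tree_size p K) (tree_size p K) (tpar p K) i"
  shows "fast_start p K j + 1 \<le> fast_start p K i"
proof -
  have j: "j \<in> {1..tree_size p K}" "j \<noteq> tree_size p K" "tpar p K j = i"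
    using assms unfolding children_def by auto
  obtain b a where ba: "b < p - 1" "a < branch_size p K" "j = node p K b a"
    using node_cases[OF j(1,2)] .
  note start_j = fast_node(2)[OF ba(1,2), folded ba(3)]
  from ba(1,2) show ?thesis
  proof (cases rule: branch_cases)
    case leaf
    then have not_leaf: "\<not> p * K < K" by linarith
    have i: "i = node p K b (p * K)" using j(3) leaf(3) ba(3) by simp
    have "fast_start p K i = p * K - K"
      unfolding i fast_node(2)[OF ba(1) top_in_branch] if_not_P[OF not_leaf] by simp
    then show ?thesis using start_j leaf leaf_slot_lt[OF ba(1) leaf(1)] by (simp add: diff_mult_distrib)
  next
    case chain
    then have "fast_start p K i = a + 1 - K"
      using j(3) fast_node(2)[OF ba(1) chain(3)] unfolding ba(3) by simp
    then show ?thesis using start_j chain by simp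
  next
    case top
    then have "\<not> a < K" "i = tree_size p K" using j(3) ba(3) by auto
    then have "fast_start p K j = a - K" "fast_start p K i = (p - 1) * K + 1"
      using start_j by (simp_all add: fast_start_def)
    then show ?thesis using top by (simp add: diff_mult_distrib)
  qed
qed

lemma fast_slots_distinct:
  assumes i: "i \<in> {1..tree_size p K}" and j: "j \<in> {1..tree_size p K}" and "i \<noteq> j"
    and same_proc: "fast_proc p K i = fast_proc p K j"
  shows "fast_start p K i \<noteq> fast_start p K j"
proof
  assume same_start: "fast_start p K i = fast_start p K j"
  have leaf_before_root: "fast_start p K x < (p - 1) * K + 1"
    if x: "x \<in> {1..tree_size p K}" "x \<noteq> tree_size p K" "fast_proc p K x = 0" for x
  proof -
    obtain b a where ba: "b < p - 1" "a < branch_size p K" "x = node p K b a"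
      using node_cases[OF x(1,2)] .
    then have "a < K" using x(3) fast_node(1)[OF ba(1,2)] by (auto split: if_splits)
    then show ?thesis
      unfolding ba(3) fast_node[OF ba(1,2)] using leaf_slot_lt[OF ba(1) \<open>a < K\<close>] by simp
  qed
  have root_proc: "fast_proc p K (tree_size p K) = 0" by (simp add: fast_proc_def)
  have root_start: "fast_start p K (tree_size p K) = (p - 1) * K + 1" by (simp add: fast_start_def)
  show False
  proof (cases "i = tree_size p K \<or> j = tree_size p K")
    case True
    then show ?thesis
      using leaf_before_root[OF i] leaf_before_root[OF j] same_proc same_start \<open>i \<noteq> j\<close>
        root_proc root_start by auto
  next
    case False
    obtain b a where ba: "b < p - 1" "a < branch_size p K" "i = node p K b a"
      using node_cases[OF i] False by blast
    obtain b' a' where ba': "b' < p - 1" "a' < branch_size p K" "j = node p K b' a'"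
      using node_cases[OF j] False by blast
    note proc_eq = same_proc[unfolded ba(3) ba'(3) fast_node[OF ba(1,2)] fast_node[OF ba'(1,2)]]
    note start_eq = same_start[unfolded ba(3) ba'(3) fast_node[OF ba(1,2)] fast_node[OF ba'(1,2)]]
    have "b = b' \<and> a = a'"
    proof (cases "a < K")
      case True
      with proc_eq have "a' < K" by (auto split: if_splits)
      with True start_eq have "b * K + a = b' * K + a'" by simp
      then have "(b * K + a) div K = (b' * K + a') div K" "(b * K + a) mod K = (b' * K + a') mod K"
        by simp_all
      with True \<open>a' < K\<close> show ?thesis by simp
    next
      case False
      with proc_eq have "\<not> a' < K" "b = b'" by (auto split: if_splits)
      with False start_eq show ?thesis by simp
    qed
    then show False using ba(3) ba'(3) \<open>i \<noteq> j\<close> by simp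
  qed
qed

lemma fast_valid:
  assumes "1 \<le> p"
  shows "valid_schedule (tree_size p K) (tree_size p K) (tpar p K) pebble_w p
           (fast_proc p K) (\<lambda>i. real (fast_start p K i))"
proof (rule unit_schedule_valid)
  fix i assume i: "i \<in> {1..tree_size p K}"
  show "fast_proc p K i < p"
  proof (cases "i = tree_size p K")
    case False
    then obtain b a where ba: "b < p - 1" "a < branch_size p K" "i = node p K b a"
      using node_cases[OF i] by blast
    then show ?thesis unfolding ba(3) fast_node[OF ba(1,2)] by auto
  qed (use assms in \<open>simp add: fast_proc_def\<close>)
next
  fix i j
  assume "i \<in> {1..tree_size p K}" "j \<in> {1..tree_size p K}" "i \<noteq> j" "fast_proc p K i = fast_proc p K j"
  then show "fast_start p K i \<noteq> fast_start p K j" by (rule fast_slots_distinct)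
next
  fix i j assume "j \<in> children (tree_size p K) (tree_size p K) (tpar p K) i"
  then show "fast_start p K j + 1 \<le> fast_start p K i" by (rule fast_precedence)
qed

lemma opt_makespan_tree:
  assumes "1 \<le> p"
  shows "opt_makespan (tree_size p K) (tree_size p K) (tpar p K) pebble_w p \<le> real ((p - 1) * K) + 2"
proof -
  have "opt_makespan (tree_size p K) (tree_size p K) (tpar p K) pebble_w p
      \<le> makespan (tree_size p K) pebble_w (\<lambda>i. real (fast_start p K i))"
    by (rule opt_makespan_le[OF _ _ fast_valid[OF assms]]) (auto simp: tree_size_def pebble_w_def)
  also have "\<dots> \<le> real ((p - 1) * K) + 2"
  proof (rule makespan_le)
    fix i assume "i \<in> {1..tree_size p K}"
    from fast_start_le[OF this]
    show "real (fast_start p K i) + pebble_w i \<le> real ((p - 1) * K) + 2"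
      unfolding pebble_w_def by linarith
  qed (simp add: tree_size_def)
  finally show ?thesis .
qed

lemma chain_start_lower:
  assumes valid: "valid_schedule (tree_size p K) (tree_size p K) (tpar p K) pebble_w p proc \<sigma>"
    and b: "b < p - 1" and "k \<le> (p - 1) * K"
  shows "real k \<le> \<sigma> (node p K b (K + k))"
  using assms(3)
proof (induction k)
  case 0
  have "K < branch_size p K" using branch_offsets(1)[OF b, of K] unfolding branch_size_def by linarith
  then show ?case
    using valid node_range(1)[OF b] unfolding valid_schedule_def by auto
next
  case (Suc k)
  have below_top: "K + k < p * K" using Suc.prems branch_offsets(2)[OF b, of K] by linarith
  then have in_branch: "K + k < branch_size p K" by (simp add: branch_size_def)
  from b in_branch have "tpar p K (node p K b (K + k)) = node p K b (K + Suc k)"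
    by (cases rule: branch_cases) (use below_top in auto)
  then have "\<sigma> (node p K b (K + k)) + 1 \<le> \<sigma> (node p K b (K + Suc k))"
    using valid_precedence[OF valid node_range[OF b in_branch]] tpar_increasing(2)[OF node_range[OF b in_branch]]
    by (simp add: pebble_w_def)
  with Suc show ?case by simp
qed

lemma top_start:
  assumes valid: "valid_schedule (tree_size p K) (tree_size p K) (tpar p K) pebble_w p proc \<sigma>"
    and fast: "makespan (tree_size p K) pebble_w \<sigma> \<le> real ((p - 1) * K) + 2"
    and b: "b < p - 1"
  shows "\<sigma> (node p K b (p * K)) = real ((p - 1) * K)"
proof (rule antisym)
  from b top_in_branch have "tpar p K (node p K b (p * K)) = tree_size p K"
    by (cases rule: branch_cases) auto
  then have "\<sigma> (node p K b (p * K)) + 1 \<le> \<sigma> (tree_size p K)"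
    using valid_precedence[OF valid node_range[OF b top_in_branch]] by (simp add: tree_size_def pebble_w_def)
  moreover have "\<sigma> (tree_size p K) + 1 \<le> makespan (tree_size p K) pebble_w \<sigma>"
    using makespan_ge[of "tree_size p K" "tree_size p K" \<sigma> pebble_w] by (simp add: tree_size_def pebble_w_def)
  ultimately show "\<sigma> (node p K b (p * K)) \<le> real ((p - 1) * K)" using fast by linarith
  from branch_offsets(2)[OF b, of K] show "real ((p - 1) * K) \<le> \<sigma> (node p K b (p * K))"
    using chain_start_lower[OF valid b, of "(p - 1) * K"] by simp
qed

(* Hence every leaf is finished by time (p - 1) K while its parent has not yet completed. *)
lemma leaves_live:
  assumes valid: "valid_schedule (tree_size p K) (tree_size p K) (tpar p K) pebble_w p proc \<sigma>"
    and fast: "makespan (tree_size p K) pebble_w \<sigma> \<le> real ((p - 1) * K) + 2"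
    and b: "b < p - 1" and a: "a < K"
  shows "node p K b a \<in> live_files (tree_size p K) (tree_size p K) (tpar p K) \<sigma> (real ((p - 1) * K))"
proof -
  have leaf: "a < branch_size p K" using a branch_offsets(1)[OF b, of K] unfolding branch_size_def by linarith
  from b leaf have parent: "tpar p K (node p K b a) = node p K b (p * K)"
    by (cases rule: branch_cases) (use a in auto)
  then have "\<sigma> (node p K b a) + 1 \<le> real ((p - 1) * K)"
    using valid_precedence[OF valid node_range[OF b leaf]] node_range(1)[OF b top_in_branch]
      top_start[OF valid fast b]
    by (simp add: pebble_w_def)
  then show ?thesis
    using node_range[OF b leaf] parent top_start[OF valid fast b] unfolding live_files_def by auto
qed

lemma peak_lower:
  assumes valid: "valid_schedule (tree_size p K) (tree_size p K) (tpar p K) pebble_w p proc \<sigma>"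
    and fast: "makespan (tree_size p K) pebble_w \<sigma> \<le> real ((p - 1) * K) + 2"
  shows "real ((p - 1) * K) \<le> peak_memory (tree_size p K) (tree_size p K) (tpar p K) pebble_w pebble_nx pebble_f \<sigma>"
proof -
  let ?leaves = "(\<lambda>(b, a). node p K b a) ` ({..<p - 1} \<times> {..<K})"
  have leaf_in_branch: "a < branch_size p K" if "b < p - 1" "a < K" for b a
    using that(2) branch_offsets(1)[OF that(1), of K] unfolding branch_size_def by linarith
  have "inj_on (\<lambda>(b, a). node p K b a) ({..<p - 1} \<times> {..<K})"
  proof (rule inj_onI)
    fix x y assume "x \<in> {..<p - 1} \<times> {..<K}" "y \<in> {..<p - 1} \<times> {..<K}"
      and same: "(\<lambda>(b, a). node p K b a) x = (\<lambda>(b, a). node p K b a) y"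
    then obtain b a b' a' where "x = (b, a)" "y = (b', a')" "a < branch_size p K" "a' < branch_size p K"
      using leaf_in_branch by blast
    with node_inj[OF this(3,4)] same show "x = y" by simp
  qed
  then have "card ?leaves = (p - 1) * K" by (simp add: card_image card_cartesian_product)
  moreover have "?leaves \<subseteq> live_files (tree_size p K) (tree_size p K) (tpar p K) \<sigma> (real ((p - 1) * K))"
    using leaves_live[OF valid fast] by (auto simp only: image_subset_iff)
  ultimately show ?thesis
    using card_le_peak[of ?leaves] by simp
qed

lemma seq_valid:
  assumes "1 \<le> p"
  shows "valid_schedule (tree_size p K) (tree_size p K) (tpar p K) pebble_w p (\<lambda>_. 0) (\<lambda>i. real (i - 1))"
proof (rule unit_schedule_valid)
  fix i j assume "j \<in> children (tree_size p K) (tree_size p K) (tpar p K) i"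
  then have "j \<in> {1..tree_size p K}" "j < i"
    using tpar_increasing(1) unfolding children_def by auto
  then show "j - 1 + 1 \<le> i - 1" by simp
qed (use assms in auto)

(*
  In slot m of the sequential schedule a non-root node i is live iff i \<le> m + 1 < tpar i + 1.
  Such nodes are leaves of the branch containing slot m, at most two chain nodes, or tops.
*)
lemma seq_live_count:
  "card {i \<in> {1..tree_size p K}. i \<noteq> tree_size p K \<and> i \<le> m + 1 \<and> m < tpar p K i} \<le> K + 2 + (p - 1)"
proof -
  let ?live = "{i \<in> {1..tree_size p K}. i \<noteq> tree_size p K \<and> i \<le> m + 1 \<and> m < tpar p K i}"
  let ?leaves = "(\<lambda>a. node p K (m div branch_size p K) a) ` {..<K}"
  let ?tops = "(\<lambda>b. node p K b (p * K)) ` {..<p - 1}"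
  have "?live \<subseteq> ?leaves \<union> {m, m + 1} \<union> ?tops"
  proof
    fix i assume i: "i \<in> ?live"
    then obtain b a where ba: "b < p - 1" "a < branch_size p K" "i = node p K b a"
      using node_cases[of i p K] by blast
    have up: "node p K b a \<le> m + 1" "m < tpar p K (node p K b a)"
      using i ba(3) by auto
    from ba(1,2) show "i \<in> ?leaves \<union> {m, m + 1} \<union> ?tops"
    proof (cases rule: branch_cases)
      case leaf
      then have "b * branch_size p K \<le> m" "m < branch_size p K * Suc b"
        using up by (auto simp: node_def branch_size_def algebra_simps)
      then have "m div branch_size p K = b" by (intro div_nat_eqI) (simp_all add: mult.commute)
      then show ?thesis using leaf ba(3) by blast
    next
      case chain
      then have "i \<le> m + 1" "m < i + 1"
        using up ba(3) by (auto simp: node_def)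
      then show ?thesis by auto
    next
      case top
      then show ?thesis using ba by blast
    qed
  qed
  then have "card ?live \<le> card (?leaves \<union> {m, m + 1} \<union> ?tops)"
    by (intro card_mono) auto
  also have "\<dots> \<le> card ?leaves + card {m, m + 1} + card ?tops"
    by (intro order_trans[OF card_Un_le] add_mono card_Un_le order_refl)
  also have "\<dots> \<le> K + 2 + (p - 1)"
    by (intro add_mono card_image_le[THEN order_trans]) (auto simp: card_insert_if)
  finally show ?thesis .
qed

lemma seq_live:
  "live_files (tree_size p K) (tree_size p K) (tpar p K) (\<lambda>i. real (i - 1)) t \<subseteq> insert (tree_size p K)
     {i \<in> {1..tree_size p K}. i \<noteq> tree_size p K \<and> i \<le> nat \<lfloor>t\<rfloor> + 1 \<and> nat \<lfloor>t\<rfloor> < tpar p K i}"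
proof
  fix i assume i: "i \<in> live_files (tree_size p K) (tree_size p K) (tpar p K) (\<lambda>i. real (i - 1)) t"
  show "i \<in> insert (tree_size p K)
     {i \<in> {1..tree_size p K}. i \<noteq> tree_size p K \<and> i \<le> nat \<lfloor>t\<rfloor> + 1 \<and> nat \<lfloor>t\<rfloor> < tpar p K i}"
  proof (cases "i = tree_size p K")
    case False
    have range: "i \<in> {1..tree_size p K}" using i unfolding live_files_def by blast
    have "1 \<le> tpar p K i" using tpar_increasing(2)[OF range False] by simp
    then have start: "real (i - 1) \<le> t" and release: "t < real (tpar p K i)"
      using i False unfolding live_files_def by (auto simp: of_nat_diff)
    then have "0 \<le> t" by linarith
    have "i - 1 \<le> nat \<lfloor>t\<rfloor>" using start by (rule le_nat_floor)
    moreover have "real (nat \<lfloor>t\<rfloor>) < real (tpar p K i)"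
      using of_nat_floor[OF \<open>0 \<le> t\<close>] release by linarith
    ultimately show ?thesis using range False by auto
  qed simp
qed

lemma opt_peak_tree:
  assumes "1 \<le> p"
  shows "opt_peak (tree_size p K) (tree_size p K) (tpar p K) pebble_w pebble_nx pebble_f p \<le> real (K + p + 2)"
proof -
  have "card (live_files (tree_size p K) (tree_size p K) (tpar p K) (\<lambda>i. real (i - 1)) t) \<le> K + p + 2" for t
  proof -
    let ?m = "nat \<lfloor>t\<rfloor>"
    have "card (live_files (tree_size p K) (tree_size p K) (tpar p K) (\<lambda>i. real (i - 1)) t)
        \<le> card (insert (tree_size p K)
             {i \<in> {1..tree_size p K}. i \<noteq> tree_size p K \<and> i \<le> ?m + 1 \<and> ?m < tpar p K i})"
      by (intro card_mono seq_live) simp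
    also have "\<dots> \<le> Suc (K + 2 + (p - 1))"
      using seq_live_count[of p K ?m] by (simp add: card_insert_if)
    finally show ?thesis using assms by simp
  qed
  then have "peak_memory (tree_size p K) (tree_size p K) (tpar p K) pebble_w pebble_nx pebble_f
      (\<lambda>i. real (i - 1)) \<le> real (K + p + 2)"
    by (rule peak_le)
  with opt_peak_bounds(2)[OF seq_valid[OF assms, of K]] show ?thesis by linarith
qed

(* The final inequality: with c = p - 1, d = p + 2, k = K, P the peak and M the optimum M*. *)
lemma ratio_gap:
  fixes c d k M P \<epsilon> :: real
  assumes "0 < c" "0 \<le> d" "0 < k" "0 \<le> M" "M \<le> k + d" "c * k \<le> P" "c * d < \<epsilon> * k"
  shows "(c - \<epsilon>) * M < P"
proof (cases "c - \<epsilon> \<le> 0")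
  case True
  then have "(c - \<epsilon>) * M \<le> 0" using assms(4) by (simp add: mult_nonpos_nonneg)
  also have "0 < c * k" using assms(1,3) by simp
  finally show ?thesis using assms(6) by linarith
next
  case False
  have "0 \<le> c * d" using assms(1,2) by simp
  then have "0 < \<epsilon> * k" using assms(7) by linarith
  then have "0 < \<epsilon>" using assms(3) by (rule zero_less_mult_pos2)
  then have "0 \<le> \<epsilon> * d" using assms(2) by simp
  have "(c - \<epsilon>) * M \<le> (c - \<epsilon>) * (k + d)" using False assms(5) by (intro mult_left_mono) auto
  also have "\<dots> = c * k - \<epsilon> * k + c * d - \<epsilon> * d" by (simp add: algebra_simps)
  also have "\<dots> < c * k" using assms(7) \<open>0 \<le> \<epsilon> * d\<close> by linarith
  finally show ?thesis using assms(6) by linarith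
qed

theorem theorem4:
  fixes p :: nat and \<epsilon> :: real
  assumes "p \<ge> 2" and "\<epsilon> > 0"
  shows "\<exists>n r par. in_tree n r par \<and>
    (\<forall>proc \<sigma>. valid_schedule n r par pebble_w p proc \<sigma>
        \<and> makespan n pebble_w \<sigma> = opt_makespan n r par pebble_w p
      \<longrightarrow> peak_memory n r par pebble_w pebble_nx pebble_f \<sigma>
          > (real p - 1 - \<epsilon>) * opt_peak n r par pebble_w pebble_nx pebble_f p)"
proof -
  obtain K :: nat where K: "(real p - 1) * (real p + 2) < \<epsilon> * real K"
    using ex_less_of_nat_mult[OF assms(2)] by (auto simp: mult.commute)
  have p1: "1 \<le> p" and c: "0 < real p - 1" using assms(1) by auto
  have "0 < (real p - 1) * (real p + 2)" using c by simp
  then have "0 < \<epsilon> * real K" using K by linarith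
  then have K_pos: "0 < real K" using assms(2) by (rule zero_less_mult_pos)
  show ?thesis
  proof (intro exI conjI allI impI)
    show "in_tree (tree_size p K) (tree_size p K) (tpar p K)" by (rule tree_in_tree)
    fix proc \<sigma>
    assume "valid_schedule (tree_size p K) (tree_size p K) (tpar p K) pebble_w p proc \<sigma> \<and>
      makespan (tree_size p K) pebble_w \<sigma> = opt_makespan (tree_size p K) (tree_size p K) (tpar p K) pebble_w p"
    then have valid: "valid_schedule (tree_size p K) (tree_size p K) (tpar p K) pebble_w p proc \<sigma>"
      and fast: "makespan (tree_size p K) pebble_w \<sigma> \<le> real ((p - 1) * K) + 2"
      using opt_makespan_tree[OF p1, of K] by auto
    have "(real p - 1) * real K \<le> peak_memory (tree_size p K) (tree_size p K) (tpar p K) pebble_w pebble_nx pebble_f \<sigma>"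
      using peak_lower[OF valid fast] p1 by (simp add: of_nat_diff)
    then show "(real p - 1 - \<epsilon>) * opt_peak (tree_size p K) (tree_size p K) (tpar p K) pebble_w pebble_nx pebble_f p
        < peak_memory (tree_size p K) (tree_size p K) (tpar p K) pebble_w pebble_nx pebble_f \<sigma>"
      using ratio_gap[OF c _ K_pos opt_peak_bounds(1)[OF valid] _ _ K] opt_peak_tree[OF p1, of K] by simp
  qed
qed

end
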